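(* There exists an invertible $24\times24$ binary matrix $A$ such that the linear kernel $g({\bf u})={\bf u}A$ has partial distance sequence $(1,2,2,2,2,2,4,4,4,4,4,4,8,8,8,8,8,8,8,12,12,12,16,16)$. Consequently $E_{24}\ge\frac1{24}\sum_{i=0}^{23}\log_{24}D_{min}^{(i)}\approx0.51577$.
   Context: A kernel of dimension $\ell$ is a bijection $g:\{0,1\}^\ell\to\{0,1\}^\ell$; a linear kernel is $g({\bf u})={\bf u}G$ over $\mathbb{F}_2$ for an invertible $\ell\times\ell$ binary matrix $G$. ${\bf a}\bullet{\bf b}$ denotes concatenation, $d_H$ Hamming distance. Partial distances: $D_{min}^{(i)}=\min\{d_H(g({\bf w}\bullet 0\bullet{\bf u}),g({\bf w}\bullet 1\bullet {\bf v})) : {\bf w}\in\{0,1\}^i,\ {\bf u},{\bf v}\in\{0,1\}^{\ell-i-1}\}$, $i=0,\dots,\ell-1$; exponent $E(g)=\frac1\ell\sum_{i}\log_\ell D_{min}^{(i)}$; $E_\ell=\max_g E(g)$ over all kernels of dimension $\ell$. *)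

theory Defs
  imports Complex_Main "HOL-Library.Z2" "Jordan_Normal_Form.Matrix"
begin

definition words :: "nat \<Rightarrow> bit list set" where
  "words l = {x. length x = l}"

definition hamming :: "bit list \<Rightarrow> bit list \<Rightarrow> nat" where
  "hamming x y = card {i. i < length x \<and> x ! i \<noteq> y ! i}"

definition is_kernel :: "nat \<Rightarrow> (bit list \<Rightarrow> bit list) \<Rightarrow> bool" where
  "is_kernel l g \<longleftrightarrow> bij_betw g (words l) (words l)"

definition lin_kernel :: "bit mat \<Rightarrow> bit list \<Rightarrow> bit list" where
  "lin_kernel G u = map (\<lambda>j. \<Sum>i<length u. u ! i * G $$ (i, j)) [0..<dim_col G]"

definition partial_distance :: "nat \<Rightarrow> (bit list \<Rightarrow> bit list) \<Rightarrow> nat \<Rightarrow> nat" where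
  "partial_distance l g i = Min {hamming (g (w @ [0] @ u)) (g (w @ [1] @ v)) | w u v.
      length w = i \<and> length u = l - i - 1 \<and> length v = l - i - 1}"

definition kernel_exponent :: "nat \<Rightarrow> (bit list \<Rightarrow> bit list) \<Rightarrow> real" where
  "kernel_exponent l g = (1 / real l) * (\<Sum>i<l. log (real l) (real (partial_distance l g i)))"

definition max_exponent :: "nat \<Rightarrow> real" where
  "max_exponent l = Max (kernel_exponent l ` {g. is_kernel l g})"

end

theory Submission
  imports Defs
begin

text \<open>
  For a linear kernel u \<mapsto> u A, two inputs with a common prefix of length i that differ in
  position i are mapped to vectors whose sum is A_i + c_(i+1) A_(i+1) + ... + c_(l-1) A_(l-1),
  so the partial distance D(i) is the least weight in the coset A_i + span(A_(i+1), ..., A_(l-1)).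
  For the matrix A below the row A_i itself has weight D(i), so only lower bounds are needed.
  All coset vectors are nonzero because A is invertible (an explicit inverse is given); rows
  1..23 have even weight, so for i \<ge> 1 all coset weights are even; rows 6..23 are annihilated
  by a 6 x 24 check matrix with distinct columns, which rules out weight 2; and for i \<ge> 12 the
  at most 2^11 coset vectors are enumerated. The exponent of a kernel only depends on its values
  on {0,1}^l, so there are finitely many exponents and E_24 is at least that of this kernel.
\<close>

(* Keep + and * on bit as field operations instead of rewriting them to xor and and. *)
declare add_bit_eq_xor [simp del] mult_bit_eq_and [simp del]

section \<open>Binary words\<close>

lemma UNIV_bit: "UNIV = {0::bit, 1}"
  by (auto intro: bit.exhaust)

lemma finite_words: "finite (words l)"
proof -
  have "finite (UNIV :: bit set)" by (simp add: UNIV_bit)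
  from finite_lists_length_eq[OF this, of l] show ?thesis by (simp add: words_def)
qed

lemma bit_add_eq_0_iff: "(a::bit) + b = 0 \<longleftrightarrow> a = b"
  by (cases a; cases b) simp_all

lemma bit_add_eq_1_iff: "(a::bit) + b = 1 \<longleftrightarrow> a \<noteq> b"
  by (cases a; cases b) simp_all

lemma map2_add_replicate_0_right: "length x = n \<Longrightarrow> map2 (+) x (replicate n (0::bit)) = x"
  by (induction x arbitrary: n) (auto simp: Suc_length_conv)

lemma map2_add_self: "map2 (+) w (w :: bit list) = replicate (length w) 0"
  by (induction w) simp_all

definition weight :: "bit list \<Rightarrow> nat" where
  "weight v = length (filter (\<lambda>b. b \<noteq> 0) v)"

lemma weight_eq_card: "weight v = card {j. j < length v \<and> v ! j \<noteq> 0}"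
  by (simp add: weight_def length_filter_conv_card)

lemma weight_eq_0_iff: "weight v = 0 \<longleftrightarrow> v = replicate (length v) 0"
  unfolding weight_def length_0_conv filter_empty_conv
  by (metis in_set_replicate replicate_length_same)

lemma hamming_eq_weight_add:
  "length x = length y \<Longrightarrow> hamming x y = weight (map2 (+) x y)"
  unfolding hamming_def weight_eq_card
  by (rule arg_cong[where f = card]) (auto simp: bit_add_eq_1_iff)

definition dot :: "bit list \<Rightarrow> bit list \<Rightarrow> bit" where
  "dot h v = sum_list (map2 (*) h v)"

lemma dot_add: "length a = length b \<Longrightarrow> dot h (map2 (+) a b) = dot h a + dot h b"
proof (induction h arbitrary: a b)
  case (Cons x h)
  then show ?case
    by (cases a; cases b) (simp_all add: dot_def distrib_left add_ac)
qed (simp add: dot_def)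

lemma dot_replicate_0: "dot h (replicate n 0) = 0"
proof (induction h arbitrary: n)
  case (Cons a h)
  then show ?case by (cases n) (simp_all add: dot_def)
qed (simp add: dot_def)

lemma dot_eq_sum: "length h = length v \<Longrightarrow> dot h v = (\<Sum>j<length v. h ! j * v ! j)"
  by (simp add: dot_def sum_list_sum_nth atLeast0LessThan)

lemma even_weight_iff_dot_ones: "even (weight v) \<longleftrightarrow> dot (replicate (length v) 1) v = 0"
proof (induction v)
  case (Cons a v)
  then show ?case by (cases a) (simp_all add: weight_def dot_def bit_add_eq_0_iff)
qed (simp add: weight_def dot_def)

lemma weight_ne_2_if_columns_distinct:
  assumes H: "\<forall>h\<in>set H. length h = length v \<and> dot h v = 0"
    and distinct: "distinct (map (\<lambda>j. map (\<lambda>h. h ! j) H) [0..<length v])"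
  shows "weight v \<noteq> 2"
proof
  assume "weight v = 2"
  then obtain a b where support: "{j. j < length v \<and> v ! j \<noteq> 0} = {a, b}" and "a \<noteq> b"
    unfolding weight_eq_card card_2_iff by blast
  then have "a \<in> {j. j < length v \<and> v ! j \<noteq> 0}" and "b \<in> {j. j < length v \<and> v ! j \<noteq> 0}"
    by simp_all
  then have a: "a < length v" "v ! a = 1" and b: "b < length v" "v ! b = 1"
    by simp_all
  have outside: "v ! j = 0" if "j < length v" "j \<notin> {a, b}" for j
    using support that by blast
  have "h ! a = h ! b" if "h \<in> set H" for h
  proof -
    have "0 = dot h v" using H that by simp
    also have "\<dots> = (\<Sum>j<length v. h ! j * v ! j)"
      using H that by (intro dot_eq_sum) blast
    also have "\<dots> = (\<Sum>j\<in>{a, b}. h ! j * v ! j)"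
      using a b outside by (intro sum.mono_neutral_right) auto
    also have "\<dots> = h ! a + h ! b"
      using a b \<open>a \<noteq> b\<close> by simp
    finally show ?thesis by (simp add: bit_add_eq_0_iff)
  qed
  then have "map (\<lambda>h. h ! a) H = map (\<lambda>h. h ! b) H" by simp
  moreover have "inj_on (\<lambda>j. map (\<lambda>h. h ! j) H) {0..<length v}"
    using distinct by (simp add: distinct_map)
  ultimately have "a = b"
    using inj_onD[of "\<lambda>j. map (\<lambda>h. h ! j) H" "{0..<length v}" a b] a b by simp
  with \<open>a \<noteq> b\<close> show False ..
qed

section \<open>Linear kernels\<close>

lemma length_lin_kernel [simp]: "length (lin_kernel A u) = dim_col A"
  by (simp add: lin_kernel_def)

lemma nth_lin_kernel:
  "j < dim_col A \<Longrightarrow> lin_kernel A u ! j = (\<Sum>i<length u. u ! i * A $$ (i, j))"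
  by (simp add: lin_kernel_def)

lemma lin_kernel_add:
  assumes "length x = length y"
  shows "lin_kernel A (map2 (+) x y) = map2 (+) (lin_kernel A x) (lin_kernel A y)"
  using assms by (intro nth_equalityI) (simp_all add: nth_lin_kernel distrib_right sum.distrib)

lemma lin_kernel_zero: "lin_kernel A (replicate n 0) = replicate (dim_col A) 0"
  by (intro nth_equalityI) (simp_all add: nth_lin_kernel)

lemma lin_kernel_one: "length u = n \<Longrightarrow> lin_kernel (1\<^sub>m n) u = u"
  by (intro nth_equalityI) (simp_all add: nth_lin_kernel if_distrib cong: if_cong)

lemma lin_kernel_mult:
  assumes A: "A \<in> carrier_mat n m" and B: "B \<in> carrier_mat m k" and u: "length u = n"
  shows "lin_kernel B (lin_kernel A u) = lin_kernel (A * B) u"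
proof (rule nth_equalityI)
  show "length (lin_kernel B (lin_kernel A u)) = length (lin_kernel (A * B) u)"
    using A B by simp
next
  fix j assume "j < length (lin_kernel B (lin_kernel A u))"
  then have j: "j < k" using B by simp
  have "lin_kernel B (lin_kernel A u) ! j = (\<Sum>i<m. (\<Sum>l<n. u ! l * A $$ (l, i)) * B $$ (i, j))"
    using A B j u by (simp add: nth_lin_kernel)
  also have "\<dots> = (\<Sum>i<m. \<Sum>l<n. u ! l * A $$ (l, i) * B $$ (i, j))"
    by (simp add: sum_distrib_right)
  also have "\<dots> = (\<Sum>l<n. \<Sum>i<m. u ! l * A $$ (l, i) * B $$ (i, j))"
    by (rule sum.swap)
  also have "\<dots> = (\<Sum>l<n. u ! l * (\<Sum>i<m. A $$ (l, i) * B $$ (i, j)))"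
    by (simp add: sum_distrib_left mult.assoc)
  also have "\<dots> = lin_kernel (A * B) u ! j"
    using A B j u by (simp add: nth_lin_kernel scalar_prod_def atLeast0LessThan)
  finally show "lin_kernel B (lin_kernel A u) ! j = lin_kernel (A * B) u ! j" .
qed

lemma invertible_mat_lin_kernel_inverse:
  assumes A: "A \<in> carrier_mat n n" and "invertible_mat A"
  obtains B where "B \<in> carrier_mat n n"
    "\<And>u. length u = n \<Longrightarrow> lin_kernel B (lin_kernel A u) = u"
    "\<And>u. length u = n \<Longrightarrow> lin_kernel A (lin_kernel B u) = u"
proof -
  from \<open>invertible_mat A\<close> obtain B where AB: "A * B = 1\<^sub>m n" and BA: "B * A = 1\<^sub>m (dim_row B)"
    using A unfolding invertible_mat_def inverts_mat_def by auto
  have "dim_col B = n" using arg_cong[OF AB, of dim_col] by simp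
  moreover have "dim_row B = n" using A arg_cong[OF BA, of dim_col] by simp
  ultimately have B: "B \<in> carrier_mat n n" by blast
  with BA have BA: "B * A = 1\<^sub>m n" by simp
  show thesis
  proof (rule that[OF B])
    show "lin_kernel B (lin_kernel A u) = u" if "length u = n" for u
      using lin_kernel_mult[OF A B that] lin_kernel_one[OF that] AB by simp
    show "lin_kernel A (lin_kernel B u) = u" if "length u = n" for u
      using lin_kernel_mult[OF B A that] lin_kernel_one[OF that] BA by simp
  qed
qed

lemma is_kernel_lin_kernel:
  assumes "A \<in> carrier_mat n n" and "invertible_mat A"
  shows "is_kernel n (lin_kernel A)"
proof -
  obtain B where B: "B \<in> carrier_mat n n"
    and BA: "\<And>u. length u = n \<Longrightarrow> lin_kernel B (lin_kernel A u) = u"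
    and AB: "\<And>u. length u = n \<Longrightarrow> lin_kernel A (lin_kernel B u) = u"
    using invertible_mat_lin_kernel_inverse[OF assms] by blast
  show ?thesis
    unfolding is_kernel_def words_def
  proof (rule bij_betw_byWitness[where f' = "lin_kernel B"])
    show "\<forall>u\<in>{u. length u = n}. lin_kernel B (lin_kernel A u) = u" using BA by blast
    show "\<forall>u\<in>{u. length u = n}. lin_kernel A (lin_kernel B u) = u" using AB by blast
    show "lin_kernel A ` {u. length u = n} \<subseteq> {u. length u = n}" using assms(1) by auto
    show "lin_kernel B ` {u. length u = n} \<subseteq> {u. length u = n}" using B by auto
  qed
qed

lemma lin_kernel_nonzero:
  assumes "A \<in> carrier_mat n n" and "invertible_mat A"
    and "length u = n" and "u \<noteq> replicate n 0"
  shows "lin_kernel A u \<noteq> replicate n 0"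
proof
  assume zero: "lin_kernel A u = replicate n 0"
  obtain B where B: "B \<in> carrier_mat n n"
    and BA: "\<And>u. length u = n \<Longrightarrow> lin_kernel B (lin_kernel A u) = u"
    using invertible_mat_lin_kernel_inverse[OF assms(1,2)] by blast
  have "u = lin_kernel B (replicate n 0)" using BA[OF assms(3)] zero by simp
  also have "\<dots> = replicate n 0" using B by (simp add: lin_kernel_zero)
  finally have "u = replicate n 0" .
  with assms(4) show False ..
qed

lemma hamming_lin_kernel:
  assumes "length u = length v"
  shows "hamming (lin_kernel A (w @ 0 # u)) (lin_kernel A (w @ 1 # v))
    = weight (lin_kernel A (replicate (length w) 0 @ 1 # map2 (+) u v))"
  using assms by (simp add: hamming_eq_weight_add lin_kernel_add[symmetric] map2_add_self)

lemma partial_distance_lin_kernel: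
  assumes "i < l"
  shows "partial_distance l (lin_kernel A) i
    = Min ((\<lambda>x. weight (lin_kernel A (replicate i 0 @ 1 # x))) ` words (l - i - 1))"
proof -
  let ?coset = "\<lambda>x. weight (lin_kernel A (replicate i 0 @ 1 # x))"
  have "{hamming (lin_kernel A (w @ [0] @ u)) (lin_kernel A (w @ [1] @ v)) | w u v.
      length w = i \<and> length u = l - i - 1 \<and> length v = l - i - 1} = ?coset ` words (l - i - 1)"
  proof (intro equalityI subsetI)
    fix d assume "d \<in> {hamming (lin_kernel A (w @ [0] @ u)) (lin_kernel A (w @ [1] @ v)) | w u v.
      length w = i \<and> length u = l - i - 1 \<and> length v = l - i - 1}"
    then obtain w u v where "length w = i" "length u = l - i - 1" "length v = l - i - 1"
      and "d = hamming (lin_kernel A (w @ [0] @ u)) (lin_kernel A (w @ [1] @ v))" by blast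
    then have "d = ?coset (map2 (+) u v)" and "map2 (+) u v \<in> words (l - i - 1)"
      by (simp_all add: hamming_lin_kernel words_def)
    then show "d \<in> ?coset ` words (l - i - 1)" by blast
  next
    fix d assume "d \<in> ?coset ` words (l - i - 1)"
    then obtain x where x: "length x = l - i - 1" and d: "d = ?coset x"
      by (auto simp: words_def)
    have "d = hamming (lin_kernel A (replicate i 0 @ [0] @ x))
        (lin_kernel A (replicate i 0 @ [1] @ replicate (l - i - 1) 0))"
      using hamming_lin_kernel[of x "replicate (l - i - 1) 0" A "replicate i 0"] x d
      by (simp add: map2_add_replicate_0_right)
    with x show "d \<in> {hamming (lin_kernel A (w @ [0] @ u)) (lin_kernel A (w @ [1] @ v)) | w u v.
      length w = i \<and> length u = l - i - 1 \<and> length v = l - i - 1}" by fastforce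
  qed
  then show ?thesis unfolding partial_distance_def by simp
qed

section \<open>Combinations of rows\<close>

fun row_comb :: "nat \<Rightarrow> bit list list \<Rightarrow> bit list \<Rightarrow> bit list" where
  "row_comb n (r # R) (c # cs) = (if c = 0 then row_comb n R cs else map2 (+) r (row_comb n R cs))"
| "row_comb n _ _ = replicate n 0"

lemma length_row_comb [simp]: "\<forall>r\<in>set R. length r = n \<Longrightarrow> length (row_comb n R c) = n"
  by (induction n R c rule: row_comb.induct) auto

lemma nth_row_comb:
  assumes "\<forall>r\<in>set R. length r = n" and "length c = length R" and "j < n"
  shows "row_comb n R c ! j = (\<Sum>i<length R. c ! i * R ! i ! j)"
  using assms
proof (induction R arbitrary: c)
  case (Cons r R)
  then obtain a cs where c: "c = a # cs" by (cases c) auto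
  with Cons show ?case
    by (cases a) (simp_all add: sum.lessThan_Suc_shift del: sum.lessThan_Suc)
qed simp

lemma row_comb_replicate_0: "row_comb n R (replicate k 0) = replicate n 0"
proof (induction k arbitrary: R)
  case 0
  show ?case by (cases R) simp_all
next
  case (Suc k)
  then show ?case by (cases R) simp_all
qed

lemma row_comb_replicate_0_append: "row_comb n R (replicate i 0 @ c) = row_comb n (drop i R) c"
proof (induction i arbitrary: R)
  case (Suc i)
  then show ?case by (cases R) (simp_all add: row_comb_replicate_0[of n _ 0, simplified])
qed simp

lemma dot_row_comb_eq_0:
  assumes "\<forall>r\<in>set R. length r = n \<and> dot h r = 0"
  shows "dot h (row_comb n R c) = 0"
  using assms
proof (induction n R c rule: row_comb.induct)
  case (1 n r R c cs)
  then show ?case by (simp add: dot_add)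
qed (simp_all add: dot_replicate_0)

lemma lin_kernel_mat_of_rows_list:
  assumes "\<forall>r\<in>set L. length r = n" and "length u = length L"
  shows "lin_kernel (mat_of_rows_list n L) u = row_comb n L u"
  using assms
  by (intro nth_equalityI) (simp_all add: nth_lin_kernel nth_row_comb mat_of_rows_list_def)

lemma mat_of_rows_list_mult:
  assumes "\<forall>r\<in>set L. length r = length M" and "\<forall>r\<in>set M. length r = n"
  shows "mat_of_rows_list (length M) L * mat_of_rows_list n M = mat_of_rows_list n (map (row_comb n M) L)"
proof (rule eq_matI)
  fix i j assume "i < dim_row (mat_of_rows_list n (map (row_comb n M) L))"
    and "j < dim_col (mat_of_rows_list n (map (row_comb n M) L))"
  then have i: "i < length L" and j: "j < n" by (simp_all add: mat_of_rows_list_def)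
  then have "length (L ! i) = length M" using assms(1) by simp
  with i j assms(2) show "(mat_of_rows_list (length M) L * mat_of_rows_list n M) $$ (i, j)
      = mat_of_rows_list n (map (row_comb n M) L) $$ (i, j)"
    by (simp add: mat_of_rows_list_def scalar_prod_def nth_row_comb atLeast0LessThan)
qed (simp_all add: mat_of_rows_list_def)

definition unit_rows :: "nat \<Rightarrow> bit list list" where
  "unit_rows n = map (\<lambda>i. map (\<lambda>j. if i = j then 1 else 0) [0..<n]) [0..<n]"

lemma mat_of_rows_list_unit_rows: "mat_of_rows_list n (unit_rows n) = 1\<^sub>m n"
  by (intro eq_matI) (simp_all add: mat_of_rows_list_def unit_rows_def)

lemma invertible_mat_of_rows_list:
  assumes "length L = n" and "\<forall>r\<in>set L. length r = n"
    and "length M = n" and "\<forall>r\<in>set M. length r = n"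
    and "map (row_comb n M) L = unit_rows n" and "map (row_comb n L) M = unit_rows n"
  shows "invertible_mat (mat_of_rows_list n L)"
proof -
  have "mat_of_rows_list n L * mat_of_rows_list n M = 1\<^sub>m n"
    using mat_of_rows_list_mult[of L M n] assms by (simp add: mat_of_rows_list_unit_rows)
  moreover have "mat_of_rows_list n M * mat_of_rows_list n L = 1\<^sub>m n"
    using mat_of_rows_list_mult[of M L n] assms by (simp add: mat_of_rows_list_unit_rows)
  ultimately show ?thesis
    using assms(1,3) unfolding invertible_mat_def inverts_mat_def
    by (intro conjI exI[of _ "mat_of_rows_list n M"]) (simp_all add: mat_of_rows_list_def)
qed

fun forall_coset :: "(bit list \<Rightarrow> bool) \<Rightarrow> bit list \<Rightarrow> bit list list \<Rightarrow> bool" where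
  "forall_coset P a [] = P a"
| "forall_coset P a (r # R) = (forall_coset P a R \<and> forall_coset P (map2 (+) r a) R)"

lemma forall_coset_sound:
  assumes "forall_coset P a R" and "\<forall>r\<in>set R. length r = length a"
  shows "P (map2 (+) a (row_comb (length a) R c))"
  using assms
proof (induction P a R arbitrary: c rule: forall_coset.induct)
  case (1 P a)
  then show ?case by (simp add: map2_add_replicate_0_right)
next
  case (2 P a r R)
  have R: "\<forall>r\<in>set R. length r = length a" and r: "length r = length a" using "2.prems" by simp_all
  show ?case
  proof (cases c)
    case Nil
    then show ?thesis using "2.IH"(1)[of "[]"] "2.prems"(1) R by simp
  next
    case (Cons x cs)
    show ?thesis
    proof (cases x)
      case zero
      then show ?thesis using "2.IH"(1)[of cs] "2.prems"(1) R Cons by simp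
    next
      case one
      have "forall_coset P (map2 (+) r a) R" using "2.prems"(1) by simp
      moreover have ra: "length (map2 (+) r a) = length a" using r by simp
      ultimately have "P (map2 (+) (map2 (+) r a) (row_comb (length a) R cs))"
        using "2.IH"(2)[of cs] R by (simp only: ra)
      moreover have "map2 (+) (map2 (+) r a) (row_comb (length a) R cs)
          = map2 (+) a (map2 (+) r (row_comb (length a) R cs))"
        using R r by (intro nth_equalityI) (simp_all add: add_ac)
      ultimately show ?thesis using Cons one by simp
    qed
  qed
qed

lemma lin_kernel_mat_of_rows_list_coset:
  assumes L: "\<forall>r\<in>set L. length r = n" and i: "i < length L" and x: "length x = length L - i - 1"
  shows "lin_kernel (mat_of_rows_list n L) (replicate i 0 @ 1 # x)
    = map2 (+) (L ! i) (row_comb n (drop (Suc i) L) x)"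
proof -
  have "lin_kernel (mat_of_rows_list n L) (replicate i 0 @ 1 # x) = row_comb n (drop i L) (1 # x)"
    using L i x by (simp add: lin_kernel_mat_of_rows_list row_comb_replicate_0_append)
  also have "\<dots> = map2 (+) (L ! i) (row_comb n (drop (Suc i) L) x)"
    using Cons_nth_drop_Suc[OF i, symmetric] by simp
  finally show ?thesis .
qed

lemma lin_kernel_mat_of_rows_list_unit_vector:
  assumes L: "\<forall>r\<in>set L. length r = n" and i: "i < length L"
  shows "lin_kernel (mat_of_rows_list n L) (replicate i 0 @ 1 # replicate (length L - i - 1) 0) = L ! i"
  using lin_kernel_mat_of_rows_list_coset[OF L i] L i
  by (simp add: row_comb_replicate_0 map2_add_replicate_0_right)

lemma dot_lin_kernel_coset_eq_0:
  assumes L: "\<forall>r\<in>set L. length r = n" and i: "i < length L" and x: "length x = length L - i - 1"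
    and h: "\<forall>r\<in>set (drop i L). dot h r = 0"
  shows "dot h (lin_kernel (mat_of_rows_list n L) (replicate i 0 @ 1 # x)) = 0"
proof -
  have "\<forall>r\<in>set (drop i L). length r = n \<and> dot h r = 0"
    using L h by (auto dest: in_set_dropD)
  then have "dot h (row_comb n (drop i L) (1 # x)) = 0" by (rule dot_row_comb_eq_0)
  then show ?thesis
    using L i x by (simp add: lin_kernel_mat_of_rows_list row_comb_replicate_0_append)
qed

lemma forall_coset_lin_kernel:
  assumes L: "\<forall>r\<in>set L. length r = n" and i: "i < length L" and x: "length x = length L - i - 1"
    and P: "forall_coset P (L ! i) (drop (Suc i) L)"
  shows "P (lin_kernel (mat_of_rows_list n L) (replicate i 0 @ 1 # x))"
proof -
  have "length (L ! i) = n" using L i by simp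
  moreover have "\<forall>r\<in>set (drop (Suc i) L). length r = n" using L by (auto dest: in_set_dropD)
  ultimately show ?thesis
    using forall_coset_sound[OF P, of x] lin_kernel_mat_of_rows_list_coset[OF L i x] by simp
qed

lemma partial_distance_mat_of_rows_list_eqI:
  assumes L: "length L = n" "\<forall>r\<in>set L. length r = n" and i: "i < n"
    and row: "weight (L ! i) = d"
    and coset: "\<And>x. length x = n - i - 1
      \<Longrightarrow> d \<le> weight (lin_kernel (mat_of_rows_list n L) (replicate i 0 @ 1 # x))"
  shows "partial_distance n (lin_kernel (mat_of_rows_list n L)) i = d"
proof -
  let ?w = "\<lambda>x. weight (lin_kernel (mat_of_rows_list n L) (replicate i 0 @ 1 # x))"
  have "?w (replicate (n - i - 1) 0) = d"
    using lin_kernel_mat_of_rows_list_unit_vector[OF L(2), of i] L i row by simp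
  moreover have "replicate (n - i - 1) 0 \<in> words (n - i - 1)" by (simp add: words_def)
  ultimately have "d \<in> ?w ` words (n - i - 1)" by (metis imageI)
  moreover have "d \<le> e" if "e \<in> ?w ` words (n - i - 1)" for e
    using that coset by (auto simp: words_def)
  ultimately show ?thesis
    unfolding partial_distance_lin_kernel[OF i]
    by (intro Min_eqI finite_imageI finite_words) auto
qed

section \<open>Finitely many exponents\<close>

lemma partial_distance_cong:
  assumes "i < l" and "\<forall>x\<in>words l. g x = g' x"
  shows "partial_distance l g i = partial_distance l g' i"
proof -
  have eq: "g (w @ b # u) = g' (w @ b # u)" if "length w = i" "length u = l - i - 1" for w b u
    using assms that by (simp add: words_def)
  show ?thesis
    unfolding partial_distance_def
    by (intro arg_cong[where f = Min] Collect_cong ex_cong1 rev_conj_cong refl) (simp add: eq)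
qed

lemma kernel_exponent_cong:
  assumes "\<forall>x\<in>words l. g x = g' x"
  shows "kernel_exponent l g = kernel_exponent l g'"
  unfolding kernel_exponent_def
  using partial_distance_cong[OF _ assms] by (intro arg_cong[where f = "(*) _"] sum.cong) simp_all

lemma finite_kernel_exponents: "finite (kernel_exponent l ` {g. is_kernel l g})"
proof (rule finite_subset)
  show "kernel_exponent l ` {g. is_kernel l g}
      \<subseteq> kernel_exponent l ` (words l \<rightarrow>\<^sub>E words l)"
  proof
    fix e assume "e \<in> kernel_exponent l ` {g. is_kernel l g}"
    then obtain g where g: "is_kernel l g" and e: "e = kernel_exponent l g" by blast
    have "restrict g (words l) \<in> words l \<rightarrow>\<^sub>E words l"
      using g unfolding is_kernel_def bij_betw_def by auto
    moreover have "e = kernel_exponent l (restrict g (words l))"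
      using e by (simp add: kernel_exponent_cong)
    ultimately show "e \<in> kernel_exponent l ` (words l \<rightarrow>\<^sub>E words l)" by blast
  qed
  show "finite (kernel_exponent l ` (words l \<rightarrow>\<^sub>E words l))"
    by (intro finite_imageI finite_PiE finite_words)
qed

lemma kernel_exponent_le_max_exponent:
  "is_kernel l g \<Longrightarrow> kernel_exponent l g \<le> max_exponent l"
  unfolding max_exponent_def by (intro Max_ge finite_kernel_exponents) blast

section \<open>The kernel of dimension 24\<close>

definition distances24 :: "nat list" where
  "distances24 = [1,2,2,2,2,2,4,4,4,4,4,4,8,8,8,8,8,8,8,12,12,12,16,16]"

definition A24_rows :: "bit list list" where
  "A24_rows = [[1,0,0,0,0,0,0,0,0,0,0,0,0,0,0,0,0,0,0,0,0,0,0,0],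
   [0,0,0,0,0,0,0,0,0,0,0,0,0,0,1,0,0,0,1,0,0,0,0,0],
   [0,1,0,0,0,0,0,0,0,0,0,0,0,0,0,0,0,1,0,0,0,0,0,0],
   [0,0,0,0,0,1,0,0,0,0,0,0,0,0,0,0,0,1,0,0,0,0,0,0],
   [0,0,0,0,0,0,1,0,0,0,0,0,0,1,0,0,0,0,0,0,0,0,0,0],
   [0,0,0,0,0,0,0,0,0,0,0,0,0,0,1,1,0,0,0,0,0,0,0,0],
   [0,0,0,0,1,0,0,0,0,0,0,0,0,1,0,0,0,1,0,0,0,0,1,0],
   [1,0,0,0,0,0,0,0,1,0,0,0,0,0,0,1,0,0,0,0,0,0,0,1],
   [0,0,0,0,0,0,0,0,1,0,0,0,1,0,0,0,0,1,0,0,0,1,0,0],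
   [0,0,0,0,1,1,0,0,0,0,0,0,1,0,0,0,0,1,0,0,0,0,0,0],
   [0,0,0,1,0,0,1,0,0,0,0,1,0,0,0,0,1,0,0,0,0,0,0,0],
   [1,0,0,0,1,1,0,0,0,0,0,0,0,0,1,0,0,0,0,0,0,0,0,0],
   [0,0,0,0,1,0,0,1,0,1,0,1,0,0,0,0,1,0,1,1,1,0,0,0],
   [0,0,0,0,0,1,0,0,1,0,0,1,0,1,1,0,0,0,0,1,0,1,1,0],
   [0,0,1,0,1,0,0,0,0,0,0,0,0,0,0,1,1,1,1,1,0,0,1,0],
   [0,1,0,0,1,0,1,1,0,0,0,0,1,0,1,1,0,0,0,0,0,1,0,0],
   [1,1,0,0,0,0,1,0,0,0,0,0,0,1,1,0,0,1,0,0,0,1,1,0],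
   [0,1,0,0,1,1,0,0,0,0,0,0,0,1,0,1,0,0,1,0,0,1,1,0],
   [1,0,0,0,1,0,1,0,0,0,0,0,0,1,0,1,0,0,0,0,1,1,0,1],
   [1,0,1,0,0,0,1,0,1,0,1,0,1,0,1,0,1,1,0,0,1,1,1,0],
   [0,1,1,1,0,0,0,0,0,1,1,0,0,1,1,1,1,0,0,1,1,1,0,0],
   [1,0,1,1,0,1,0,1,1,1,0,1,0,1,0,0,0,0,0,0,1,1,1,0],
   [0,0,0,0,1,0,1,1,1,1,1,1,1,1,0,1,1,0,1,1,1,1,1,0],
   [1,1,1,1,0,1,0,1,0,1,0,0,1,0,1,1,1,1,1,0,0,1,1,1]]"

definition A24_inverse_rows :: "bit list list" where
  "A24_inverse_rows = [[1,0,0,0,0,0,0,0,0,0,0,0,0,0,0,0,0,0,0,0,0,0,0,0],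
   [1,0,1,0,1,1,1,1,0,0,1,1,1,0,0,1,1,1,1,1,1,0,0,0],
   [1,0,1,1,0,0,1,1,0,1,1,0,1,1,1,1,1,1,0,1,1,1,0,1],
   [1,1,0,1,0,1,1,1,1,1,1,1,0,0,1,1,0,0,1,1,1,1,0,0],
   [1,0,1,1,1,0,0,0,0,1,1,0,1,0,1,0,1,1,1,0,0,0,0,1],
   [1,0,0,1,1,1,1,1,0,0,1,1,1,0,0,1,1,1,1,1,1,0,0,0],
   [1,1,0,0,1,0,1,1,0,0,1,0,1,0,0,1,0,0,1,1,1,0,0,0],
   [1,0,0,0,1,0,0,1,0,1,1,0,1,0,0,0,0,1,1,1,1,0,0,0],
   [1,1,0,1,1,1,1,0,1,0,1,0,1,0,1,0,1,0,1,0,0,0,0,1],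
   [1,0,0,0,0,1,1,1,1,0,0,0,0,0,0,0,0,1,1,0,1,1,1,0],
   [1,1,0,1,0,0,1,0,1,0,0,0,1,0,0,0,1,1,0,0,0,0,1,0],
   [1,1,1,1,0,0,0,1,0,1,1,1,0,1,0,0,1,1,0,1,0,0,1,1],
   [1,0,1,0,1,0,0,0,0,0,1,0,1,0,1,0,1,1,1,0,0,0,0,1],
   [1,1,0,0,0,0,1,1,0,0,1,0,1,0,0,1,0,0,1,1,1,0,0,0],
   [1,0,1,0,0,1,1,1,0,1,0,0,0,0,1,1,0,0,0,1,1,0,0,1],
   [1,0,1,0,0,0,1,1,0,1,0,0,0,0,1,1,0,0,0,1,1,0,0,1],
   [1,1,1,0,1,1,0,1,1,0,0,0,1,1,1,0,1,1,0,1,0,1,1,1],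
   [1,0,0,0,1,1,1,1,0,0,1,1,1,0,0,1,1,1,1,1,1,0,0,0],
   [1,1,1,0,0,1,1,1,0,1,0,0,0,0,1,1,0,0,0,1,1,0,0,1],
   [1,1,0,1,1,0,1,1,1,1,0,0,1,0,1,0,0,0,1,1,0,0,1,0],
   [1,0,0,1,0,1,1,0,1,1,1,1,1,0,0,1,1,1,0,1,1,0,0,0],
   [1,1,1,1,1,0,0,1,0,0,1,1,1,0,0,1,1,0,1,1,1,0,0,0],
   [1,1,1,1,0,1,1,0,0,1,1,1,1,0,1,0,0,0,1,0,0,0,0,1],
   [1,1,1,1,1,1,0,0,1,1,1,0,1,0,0,1,1,0,1,1,1,0,0,0]]"

definition A24_check_rows :: "bit list list" where
  "A24_check_rows = [[0,1,1,0,1,0,0,0,0,0,0,1,1,0,1,1,1,0,1,0,0,1,1,1],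
   [0,0,1,1,1,1,0,0,1,0,1,1,0,0,0,0,0,0,0,1,1,1,1,1],
   [0,0,1,0,0,1,1,1,1,0,0,1,0,0,1,1,0,1,1,1,0,0,1,0],
   [1,1,1,1,0,1,1,0,0,0,0,0,0,0,0,1,0,1,1,1,0,1,1,0],
   [1,0,0,1,0,1,1,1,1,0,0,0,1,1,0,1,0,0,0,0,1,0,1,1],
   [0,1,0,0,0,1,1,0,0,1,1,1,0,1,1,0,0,1,0,1,1,1,0,0]]"

definition A24 :: "bit mat" where
  "A24 = mat_of_rows_list 24 A24_rows"

lemma length_A24_rows: "length A24_rows = 24"
  by code_simp

lemma length_A24_row: "\<forall>r\<in>set A24_rows. length r = 24"
  by code_simp

lemma length_A24_inverse_rows: "length A24_inverse_rows = 24"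
  by code_simp

lemma length_A24_inverse_row: "\<forall>r\<in>set A24_inverse_rows. length r = 24"
  by code_simp

lemma A24_rows_inverse: "map (row_comb 24 A24_inverse_rows) A24_rows = unit_rows 24"
  by code_simp

lemma A24_inverse_rows_inverse: "map (row_comb 24 A24_rows) A24_inverse_rows = unit_rows 24"
  by code_simp

lemma weight_A24_rows: "map weight A24_rows = distances24"
  by code_simp

lemma A24_rows_even: "\<forall>r\<in>set (drop 1 A24_rows). dot (replicate 24 1) r = 0"
  by code_simp

lemma A24_rows_checked: "\<forall>r\<in>set (drop 6 A24_rows). \<forall>h\<in>set A24_check_rows. dot h r = 0"
  by code_simp

lemma length_A24_check_row: "\<forall>h\<in>set A24_check_rows. length h = 24"
  by code_simp

lemma A24_check_columns_distinct:
  "distinct (map (\<lambda>j. map (\<lambda>h. h ! j) A24_check_rows) [0..<24])"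
  by code_simp

lemma A24_coset_weights:
  "\<forall>i\<in>{12..<24}. forall_coset (\<lambda>v. distances24 ! i \<le> weight v) (A24_rows ! i) (drop (Suc i) A24_rows)"
  by code_simp

lemma distances24_below_12:
  "\<forall>i\<in>{..<12}. distances24 ! i = (if i = 0 then 1 else if i < 6 then 2 else 4)"
  by code_simp

lemma A24_carrier: "A24 \<in> carrier_mat 24 24"
  using length_A24_rows by (simp add: A24_def mat_of_rows_list_def)

lemma invertible_A24: "invertible_mat A24"
  unfolding A24_def
  using length_A24_rows length_A24_row length_A24_inverse_rows length_A24_inverse_row
    A24_rows_inverse A24_inverse_rows_inverse
  by (rule invertible_mat_of_rows_list)

lemma weight_A24_coset_pos:
  assumes i: "i < 24" and x: "length x = 23 - i"
  shows "weight (lin_kernel A24 (replicate i 0 @ 1 # x)) \<noteq> 0"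
proof -
  have "replicate i 0 @ 1 # x \<noteq> replicate 24 0"
  proof
    assume "replicate i 0 @ 1 # x = replicate 24 0"
    then have "(replicate i 0 @ 1 # x) ! i = replicate 24 0 ! i" by simp
    with i show False by (simp add: nth_append)
  qed
  then have "lin_kernel A24 (replicate i 0 @ 1 # x) \<noteq> replicate 24 0"
    using A24_carrier invertible_A24 i x by (intro lin_kernel_nonzero) auto
  then show ?thesis
    using A24_carrier by (simp add: weight_eq_0_iff)
qed

lemma even_weight_A24_coset:
  assumes i: "1 \<le> i" "i < 24" and x: "length x = 23 - i"
  shows "even (weight (lin_kernel A24 (replicate i 0 @ 1 # x)))"
proof -
  have "\<forall>r\<in>set (drop i A24_rows). dot (replicate 24 1) r = 0"
    using A24_rows_even set_drop_subset_set_drop[OF i(1), of A24_rows] by auto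
  then have "dot (replicate 24 1) (lin_kernel A24 (replicate i 0 @ 1 # x)) = 0"
    unfolding A24_def using length_A24_row length_A24_rows i x
    by (intro dot_lin_kernel_coset_eq_0) simp_all
  then show ?thesis
    using A24_carrier by (simp add: even_weight_iff_dot_ones)
qed

lemma weight_A24_coset_ne_2:
  assumes i: "6 \<le> i" "i < 24" and x: "length x = 23 - i"
  shows "weight (lin_kernel A24 (replicate i 0 @ 1 # x)) \<noteq> 2"
proof (rule weight_ne_2_if_columns_distinct)
  let ?v = "lin_kernel A24 (replicate i 0 @ 1 # x)"
  have "dot h ?v = 0" if "h \<in> set A24_check_rows" for h
  proof -
    have "\<forall>r\<in>set (drop i A24_rows). dot h r = 0"
      using A24_rows_checked set_drop_subset_set_drop[OF i(1), of A24_rows] that by auto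
    then show ?thesis
      unfolding A24_def using length_A24_row length_A24_rows i x
      by (intro dot_lin_kernel_coset_eq_0) simp_all
  qed
  then show "\<forall>h\<in>set A24_check_rows. length h = length ?v \<and> dot h ?v = 0"
    using length_A24_check_row A24_carrier by simp
  show "distinct (map (\<lambda>j. map (\<lambda>h. h ! j) A24_check_rows) [0..<length ?v])"
    using A24_check_columns_distinct A24_carrier by simp
qed

lemma A24_coset_weight_ge:
  assumes i: "i < 24" and x: "length x = 23 - i"
  shows "distances24 ! i \<le> weight (lin_kernel A24 (replicate i 0 @ 1 # x))"
proof (cases "12 \<le> i")
  case True
  then have "forall_coset (\<lambda>v. distances24 ! i \<le> weight v) (A24_rows ! i) (drop (Suc i) A24_rows)"
    using A24_coset_weights i by simp
  then show ?thesis
    unfolding A24_def using length_A24_row length_A24_rows i x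
    by (intro forall_coset_lin_kernel[where P = "\<lambda>v. distances24 ! i \<le> weight v"]) simp_all
next
  case False
  then have "distances24 ! i = (if i = 0 then 1 else if i < 6 then 2 else 4)"
    using distances24_below_12 by simp
  with weight_A24_coset_pos[OF i x] even_weight_A24_coset[OF _ i x]
    weight_A24_coset_ne_2[OF _ i x]
  show ?thesis by presburger
qed

lemma partial_distance_A24:
  assumes "i < 24"
  shows "partial_distance 24 (lin_kernel A24) i = distances24 ! i"
  unfolding A24_def
proof (rule partial_distance_mat_of_rows_list_eqI[OF length_A24_rows length_A24_row assms])
  show "weight (A24_rows ! i) = distances24 ! i"
    using weight_A24_rows length_A24_rows assms by (metis nth_map)
  show "distances24 ! i \<le> weight (lin_kernel (mat_of_rows_list 24 A24_rows) (replicate i 0 @ 1 # x))"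
    if "length x = 24 - i - 1" for x
    using A24_coset_weight_ge[OF assms] that by (simp add: A24_def)
qed

theorem mainTheorem12:
  fixes D :: "nat list"
  defines "D \<equiv> [1,2,2,2,2,2,4,4,4,4,4,4,8,8,8,8,8,8,8,12,12,12,16,16]"
  shows "(\<exists>A :: bit mat. A \<in> carrier_mat 24 24 \<and> invertible_mat A \<and>
            (\<forall>i<24. partial_distance 24 (lin_kernel A) i = D ! i))
         \<and> max_exponent 24 \<ge> (1 / 24) * (\<Sum>i<24. log 24 (real (D ! i)))"
proof -
  have D: "D = distances24" by (simp add: D_def distances24_def)
  have "kernel_exponent 24 (lin_kernel A24) = (1 / 24) * (\<Sum>i<24. log 24 (real (D ! i)))"
    unfolding kernel_exponent_def D using partial_distance_A24 by simp
  moreover have "kernel_exponent 24 (lin_kernel A24) \<le> max_exponent 24"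
    using is_kernel_lin_kernel[OF A24_carrier invertible_A24] by (rule kernel_exponent_le_max_exponent)
  ultimately show ?thesis
    using A24_carrier invertible_A24 partial_distance_A24 D by auto
qed

end
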